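(* There exist $(P_3,l)$-jumbles for infinitely many positive integers $l$.
   Context: All graphs are finite and simple; $P_3$ is the path on $3$ vertices, and a graph is $P_3$-free if it has no induced subgraph isomorphic to $P_3$. For a positive integer $l$, a graph $H$ is a $(P_3,l)$-jumble if (S1) for every $0\le s\le l-1$, $V(H)$ can be partitioned into $s$ stable sets, $l-1-s$ cliques, and a set $Z$ such that $H[Z]$ is isomorphic to $P_3$; and (S2) for every partition $X_1,\dots,X_l$ of $V(H)$ there exists $i$ such that $H[X_i]$ is not $P_3$-free. *)

theory Defs
  imports Main
begin

definition simple_graph :: "'a set \<Rightarrow> ('a \<Rightarrow> 'a \<Rightarrow> bool) \<Rightarrow> bool" where
  "simple_graph V E \<longleftrightarrow> finite V \<and> (\<forall>x\<in>V. \<forall>y\<in>V. E x y \<longleftrightarrow> E y x) \<and> (\<forall>x\<in>V. \<not> E x x)"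

definition stable_set :: "('a \<Rightarrow> 'a \<Rightarrow> bool) \<Rightarrow> 'a set \<Rightarrow> bool" where
  "stable_set E X \<longleftrightarrow> (\<forall>x\<in>X. \<forall>y\<in>X. x \<noteq> y \<longrightarrow> \<not> E x y)"

definition clique :: "('a \<Rightarrow> 'a \<Rightarrow> bool) \<Rightarrow> 'a set \<Rightarrow> bool" where
  "clique E X \<longleftrightarrow> (\<forall>x\<in>X. \<forall>y\<in>X. x \<noteq> y \<longrightarrow> E x y)"

definition induces_P3 :: "('a \<Rightarrow> 'a \<Rightarrow> bool) \<Rightarrow> 'a set \<Rightarrow> bool" where
  "induces_P3 E Z \<longleftrightarrow> (\<exists>a b c. Z = {a, b, c} \<and> a \<noteq> b \<and> b \<noteq> c \<and> a \<noteq> c \<and>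
       E a b \<and> E b c \<and> \<not> E a c)"

definition P3_free :: "('a \<Rightarrow> 'a \<Rightarrow> bool) \<Rightarrow> 'a set \<Rightarrow> bool" where
  "P3_free E X \<longleftrightarrow> \<not> (\<exists>Z\<subseteq>X. induces_P3 E Z)"

(* (P_3,l)-jumble. A partition of V into l (possibly empty) labelled parts
   X_0..X_{l-1} is encoded by a map f : V -> {0..<l}, X_i = {v in V. f v = i}. *)
definition P3_jumble :: "'a set \<Rightarrow> ('a \<Rightarrow> 'a \<Rightarrow> bool) \<Rightarrow> nat \<Rightarrow> bool" where
  "P3_jumble V E l \<longleftrightarrow> simple_graph V E \<and> l > 0 \<and>
     \<comment> \<open>(S1): parts 0..s-1 stable, parts s..l-2 cliques, part l-1 is Z with H[Z] = P3\<close>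
     (\<forall>s. s \<le> l - 1 \<longrightarrow>
        (\<exists>f. (\<forall>v\<in>V. f v < l) \<and>
             (\<forall>i<s. stable_set E {v\<in>V. f v = i}) \<and>
             (\<forall>i. s \<le> i \<and> i < l - 1 \<longrightarrow> clique E {v\<in>V. f v = i}) \<and>
             induces_P3 E {v\<in>V. f v = l - 1})) \<and>
     \<comment> \<open>(S2): every partition into l parts has a part that is not P3-free\<close>
     (\<forall>f. (\<forall>v\<in>V. f v < l) \<longrightarrow> (\<exists>i<l. \<not> P3_free E {v\<in>V. f v = i}))"

end

theory Submission
  imports Defs "HOL-Library.Nat_Bijection"
begin

text \<open>For every \<open>l \<ge> 1\<close> the complete multipartite graph with classes of sizes
  \<open>1, 2, \<dots>, l + 1\<close> is a \<open>(P\<^sub>3, l)\<close>-jumble. In a complete multipartite graph a set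
  induces no \<open>P\<^sub>3\<close> iff it lies inside one class or meets every class at most once, and a
  counting argument shows that \<open>l\<close> such sets cannot cover the graph. For (S1) with
  \<open>c = l - 1 - s\<close> cliques, the \<open>P\<^sub>3\<close> consists of two vertices of the class of size
  \<open>c + 2\<close> and one of the class of size \<open>c + 1\<close>; the cliques are the rows
  \<open>{vertex k of each class}\<close> for \<open>k < c\<close>, which exhaust the remaining vertices of the
  classes of size at most \<open>c + 2\<close>; the other \<open>s\<close> classes are the stable sets.\<close>

definition complete_multipartite :: "('a \<Rightarrow> 'b) \<Rightarrow> 'a \<Rightarrow> 'a \<Rightarrow> bool" where
  "complete_multipartite part x y \<longleftrightarrow> part x \<noteq> part y"

lemma P3_free_complete_multipartite_cases:
  assumes "P3_free (complete_multipartite part) X"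
  shows "inj_on part X \<or> (\<exists>q. \<forall>v\<in>X. part v = q)"
proof (cases "inj_on part X")
  case False
  then obtain u w where uw: "u \<in> X" "w \<in> X" "u \<noteq> w" "part u = part w"
    by (auto simp: inj_on_def)
  have "part y = part u" if "y \<in> X" for y
  proof (rule ccontr)
    assume "part y \<noteq> part u"
    then have "induces_P3 (complete_multipartite part) {u, y, w}"
      using uw unfolding induces_P3_def complete_multipartite_def by metis
    moreover have "{u, y, w} \<subseteq> X" using uw \<open>y \<in> X\<close> by auto
    ultimately show False using assms unfolding P3_free_def by blast
  qed
  then show ?thesis by blast
qed simp

text \<open>The parts outside the set \<open>T\<close> of transversals each lie inside one class, so
  together they meet at most \<open>l - card T\<close> classes. Hence some class of size
  \<open>p > card T\<close> is covered by the transversals alone, each of which contains at most one of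
  its vertices.\<close>

lemma complete_multipartite_partition_not_P3_free:
  fixes part f :: "'a \<Rightarrow> nat"
  assumes big: "\<And>p. 1 \<le> p \<Longrightarrow> p \<le> l + 1 \<Longrightarrow> p \<le> card {v\<in>V. part v = p}"
    and f: "\<forall>v\<in>V. f v < l"
  shows "\<exists>i<l. \<not> P3_free (complete_multipartite part) {v\<in>V. f v = i}"
proof (rule ccontr)
  define X where "X i = {v\<in>V. f v = i}" for i
  assume "\<not> ?thesis"
  then have free: "P3_free (complete_multipartite part) (X i)" if "i < l" for i
    using that unfolding X_def by blast
  define T where "T = {i. i < l \<and> inj_on part (X i)}"
  have T: "T \<subseteq> {..<l}" "finite T" unfolding T_def by auto
  have "\<forall>i\<in>{..<l} - T. \<exists>q. \<forall>v\<in>X i. part v = q"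
    using P3_free_complete_multipartite_cases[OF free] unfolding T_def by auto
  then obtain cls where cls: "\<And>i v. i \<in> {..<l} - T \<Longrightarrow> v \<in> X i \<Longrightarrow> part v = cls i"
    by metis
  define Q where "Q = part ` {v\<in>V. f v \<notin> T}"
  have Q: "Q \<subseteq> cls ` ({..<l} - T)"
    unfolding Q_def using f cls X_def by fastforce
  then have "finite Q" by (simp add: finite_subset)
  have "card Q \<le> card (cls ` ({..<l} - T))" using Q by (simp add: card_mono)
  also have "\<dots> \<le> card ({..<l} - T)" by (rule card_image_le) simp
  also have "\<dots> = l - card T" using T by (simp add: card_Diff_subset)
  finally have "card Q < card {card T + 1..l + 1}"
    using card_mono[OF finite_lessThan T(1)] by simp
  then have "\<not> {card T + 1..l + 1} \<subseteq> Q"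
    using card_mono[OF \<open>finite Q\<close>] by (meson not_le)
  then obtain p where p: "card T + 1 \<le> p" "p \<le> l + 1" "p \<notin> Q"
    by (auto simp: subset_iff)
  define C where "C = {v\<in>V. part v = p}"
  have "f ` C \<subseteq> T" using p(3) unfolding C_def Q_def by auto
  moreover have "inj_on f C"
  proof (rule inj_onI)
    fix u w assume "u \<in> C" "w \<in> C" "f u = f w"
    moreover have "inj_on part (X (f u))" using \<open>f ` C \<subseteq> T\<close> \<open>u \<in> C\<close> unfolding T_def by auto
    ultimately show "u = w" unfolding C_def X_def inj_on_def by auto
  qed
  ultimately have "card C \<le> card T" using T(2) by (simp add: card_inj_on_le)
  moreover have "p \<le> card C" using big p unfolding C_def by auto
  ultimately show False using p by simp
qed

definition stable_clique_P3_partition ::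
    "'a set \<Rightarrow> ('a \<Rightarrow> 'a \<Rightarrow> bool) \<Rightarrow> nat \<Rightarrow> nat \<Rightarrow> ('a \<Rightarrow> nat) \<Rightarrow> bool" where
  "stable_clique_P3_partition V E l s f \<longleftrightarrow> (\<forall>v\<in>V. f v < l) \<and>
     (\<forall>i<s. stable_set E {v\<in>V. f v = i}) \<and>
     (\<forall>i. s \<le> i \<and> i < l - 1 \<longrightarrow> clique E {v\<in>V. f v = i}) \<and>
     induces_P3 E {v\<in>V. f v = l - 1}"

lemma P3_jumble_iff:
  "P3_jumble V E l \<longleftrightarrow> simple_graph V E \<and> 0 < l \<and>
     (\<forall>s \<le> l - 1. \<exists>f. stable_clique_P3_partition V E l s f) \<and>
     (\<forall>f. (\<forall>v\<in>V. f v < l) \<longrightarrow> (\<exists>i<l. \<not> P3_free E {v\<in>V. f v = i}))"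
  unfolding P3_jumble_def stable_clique_P3_partition_def by blast

lemma stable_set_image:
  assumes "\<And>x y. x \<in> X \<Longrightarrow> y \<in> X \<Longrightarrow> E' (h x) (h y) = E x y" "stable_set E X"
  shows "stable_set E' (h ` X)"
  using assms unfolding stable_set_def by fastforce

lemma clique_image:
  assumes "\<And>x y. x \<in> X \<Longrightarrow> y \<in> X \<Longrightarrow> E' (h x) (h y) = E x y" "clique E X"
  shows "clique E' (h ` X)"
  using assms unfolding clique_def by fastforce

lemma induces_P3_image:
  assumes "inj_on h Z" "\<And>x y. x \<in> Z \<Longrightarrow> y \<in> Z \<Longrightarrow> E' (h x) (h y) = E x y"
    and "induces_P3 E Z"
  shows "induces_P3 E' (h ` Z)"
proof -
  obtain a b c where Z: "Z = {a, b, c}" "a \<noteq> b" "b \<noteq> c" "a \<noteq> c" "E a b" "E b c" "\<not> E a c"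
    using assms(3) unfolding induces_P3_def by blast
  then have "h ` Z = {h a, h b, h c}" "h a \<noteq> h b" "h b \<noteq> h c" "h a \<noteq> h c"
    using assms(1) by (auto simp: inj_on_def)
  moreover have "E' (h a) (h b)" "E' (h b) (h c)" "\<not> E' (h a) (h c)"
    using Z assms(2) by auto
  ultimately show ?thesis unfolding induces_P3_def by blast
qed

lemma stable_clique_P3_partition_image:
  assumes "stable_clique_P3_partition V E l s f" and inj: "inj_on h V"
    and edges: "\<And>x y. x \<in> V \<Longrightarrow> y \<in> V \<Longrightarrow> E' (h x) (h y) = E x y"
  shows "stable_clique_P3_partition (h ` V) E' l s (f \<circ> inv_into V h)"
proof -
  have parts: "{v\<in>h ` V. (f \<circ> inv_into V h) v = i} = h ` {v\<in>V. f v = i}" for i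
    using inj by (auto simp: image_iff)
  show ?thesis
    using assms(1) inj edges
    unfolding stable_clique_P3_partition_def parts
    by (auto intro!: stable_set_image[where h = h and E = E and E' = E']
        clique_image[where h = h and E = E and E' = E'] induces_P3_image[where E = E]
        intro: inj_on_subset)
qed

lemma P3_jumble_image:
  assumes jumble: "P3_jumble V E l" and inj: "inj_on h V"
    and edges: "\<And>x y. x \<in> V \<Longrightarrow> y \<in> V \<Longrightarrow> E' (h x) (h y) = E x y"
  shows "P3_jumble (h ` V) E' l"
  unfolding P3_jumble_iff
proof (intro conjI allI impI)
  show "simple_graph (h ` V) E'" "0 < l"
    using jumble edges unfolding P3_jumble_def simple_graph_def by auto
  show "\<exists>g. stable_clique_P3_partition (h ` V) E' l s g" if "s \<le> l - 1" for s
    using jumble that stable_clique_P3_partition_image[where E' = E', OF _ inj edges]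
    unfolding P3_jumble_iff by blast
  show "\<exists>i<l. \<not> P3_free E' {v\<in>h ` V. g v = i}" if g: "\<forall>v\<in>h ` V. g v < l" for g
  proof -
    obtain i where i: "i < l" "\<not> P3_free E {v\<in>V. g (h v) = i}"
      using jumble g unfolding P3_jumble_iff by (elim conjE allE[of _ "\<lambda>v. g (h v)"]) auto
    then obtain Z where Z: "Z \<subseteq> {v\<in>V. g (h v) = i}" "induces_P3 E Z"
      unfolding P3_free_def by blast
    have "induces_P3 E' (h ` Z)"
      using Z inj edges by (intro induces_P3_image) (auto intro: inj_on_subset)
    moreover have "h ` Z \<subseteq> {v\<in>h ` V. g v = i}" using Z by auto
    ultimately show ?thesis using i(1) unfolding P3_free_def by blast
  qed
qed

text \<open>Vertex \<open>(p, k)\<close> is the \<open>k\<close>-th vertex of the class of size \<open>p\<close>.\<close>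

definition staircase :: "nat \<Rightarrow> (nat \<times> nat) set" where
  "staircase l = {(p, k). 1 \<le> p \<and> p \<le> l + 1 \<and> k < p}"

lemma card_staircase_part:
  assumes "1 \<le> p" "p \<le> l + 1"
  shows "card {v\<in>staircase l. fst v = p} = p"
proof -
  have "{v\<in>staircase l. fst v = p} = {p} \<times> {..<p}"
    using assms unfolding staircase_def by auto
  then show ?thesis by (simp add: card_cartesian_product)
qed

lemma staircase_stable_clique_P3_partition:
  assumes "0 < l" "s \<le> l - 1"
  shows "\<exists>f. stable_clique_P3_partition (staircase l) (complete_multipartite fst) l s f"
proof -
  define c where "c = l - 1 - s"
  define Z where "Z = {(c + 2, c), (c + 1, c), (c + 2, c + 1)}"
  define f where "f v = (if v \<in> Z then l - 1 else if c + 3 \<le> fst v then fst v - (c + 3) else s + snd v)"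
    for v
  have small: "snd v < c" if "v \<in> staircase l" "v \<notin> Z" "fst v < c + 3" for v
    using that unfolding staircase_def Z_def by auto
  have off_Z: "f v < l - 1" if "v \<in> staircase l" "v \<notin> Z" for v
  proof (cases "c + 3 \<le> fst v")
    case True
    then show ?thesis using that assms unfolding f_def c_def staircase_def by auto
  next
    case False
    then show ?thesis using that small[OF that] assms unfolding f_def c_def by auto
  qed
  have parts_Z: "{v\<in>staircase l. f v = l - 1} = Z"
  proof
    show "{v\<in>staircase l. f v = l - 1} \<subseteq> Z" using off_Z by fastforce
    show "Z \<subseteq> {v\<in>staircase l. f v = l - 1}"
      using assms unfolding Z_def f_def c_def staircase_def by auto
  qed
  show ?thesis
    unfolding stable_clique_P3_partition_def
  proof (intro exI[of _ f] conjI allI impI ballI)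
    show "f v < l" if "v \<in> staircase l" for v
      using off_Z[OF that] assms unfolding f_def by (cases "v \<in> Z") auto
    show "stable_set (complete_multipartite fst) {v\<in>staircase l. f v = i}" if "i < s" for i
    proof -
      have "fst v = i + c + 3" if "v \<in> staircase l" "f v = i" for v
        using that \<open>i < s\<close> small[OF that(1)] assms unfolding f_def c_def by (auto split: if_splits)
      then show ?thesis unfolding stable_set_def complete_multipartite_def by auto
    qed
    show "clique (complete_multipartite fst) {v\<in>staircase l. f v = i}" if "s \<le> i \<and> i < l - 1" for i
    proof -
      have "snd v = i - s" if "v \<in> staircase l" "f v = i" for v
        using that \<open>s \<le> i \<and> i < l - 1\<close> unfolding f_def c_def staircase_def by (auto split: if_splits)
      then show ?thesis unfolding clique_def complete_multipartite_def by (auto simp: prod_eq_iff)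
    qed
    show "induces_P3 (complete_multipartite fst) {v\<in>staircase l. f v = l - 1}"
      unfolding parts_Z induces_P3_def complete_multipartite_def Z_def
      by (intro exI[of _ "(c + 2, c)"] exI[of _ "(c + 1, c)"] exI[of _ "(c + 2, c + 1)"]) simp
  qed
qed

lemma P3_jumble_staircase:
  assumes "0 < l"
  shows "P3_jumble (staircase l) (complete_multipartite fst) l"
  unfolding P3_jumble_iff
proof (intro conjI allI impI)
  have "staircase l \<subseteq> {..l + 1} \<times> {..l + 1}" unfolding staircase_def by auto
  then show "simple_graph (staircase l) (complete_multipartite fst)"
    unfolding simple_graph_def complete_multipartite_def by (auto intro: finite_subset)
  show "\<exists>f. stable_clique_P3_partition (staircase l) (complete_multipartite fst) l s f"
    if "s \<le> l - 1" for s
    using assms that by (rule staircase_stable_clique_P3_partition)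
  show "\<exists>i<l. \<not> P3_free (complete_multipartite fst) {v\<in>staircase l. f v = i}"
    if "\<forall>v\<in>staircase l. f v < l" for f
    using that by (intro complete_multipartite_partition_not_P3_free) (simp_all add: card_staircase_part)
qed (rule assms)

theorem theorem3p5:
  shows "infinite {l::nat. l > 0 \<and> (\<exists>(V::nat set) E. P3_jumble V E l)}"
proof -
  have "P3_jumble (prod_encode ` staircase l) (complete_multipartite (fst \<circ> prod_decode)) l"
    if "0 < l" for l
    using P3_jumble_staircase[OF that] inj_prod_encode
    by (rule P3_jumble_image) (simp add: complete_multipartite_def)
  then have "{0<..} \<subseteq> {l::nat. l > 0 \<and> (\<exists>(V::nat set) E. P3_jumble V E l)}"
    by blast
  then show ?thesis
    using infinite_Ioi infinite_super by blast
qed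

end
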